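(* Let $P\in\mathbb{R}^{p\times\tilde p}$ be a fixed matrix. For $\lambda>0$, consider the projected attributor $$\tau_{\lambda,P}(z',z):=-\nabla_\theta f(z',\theta_S^* )^\top P(P^\top F_SP+\lambda I_{\tilde p})^{-1}P^\top\nabla_\theta L(z,\theta_S^* ).$$ Let $c_p^P(\lambda;z')$ be the Pearson correlation, under $A\sim D_a$, between $f(z',\theta_A^* )$ and $\sum_{z\in A}\tau_{\lambda,P}(z',z)$. Write $u:=P^\top\nabla_\theta f(z',\theta_S^* )$ and $\hat F:=P^\top F_SP$, and define - $t^P_{k,z',\lambda}:=u^\top(\hat F+\lambda I_{\tilde p})^{-k}\hat F u$; - $r^P_{z',\lambda}:=-u^\top(\hat F+\lambda I_{\tilde p})^{-1}P^\top g_{z'}$; - $o^P_{z',\lambda}:=\alpha_{z'}^\top(JPP^\top J^\top+n\lambda I_n)^{-1}\alpha_{z'}$. Assume $\hat Fu\neq0$, $\mathrm{Var}_{A\sim D_a}[f(z',\theta_A^* )]>0$, and $\alpha_{z'}\neq0$. If $$\frac{r^P_{z',\lambda}}{\sqrt{o^P_{z',\lambda}t^P_{1,z',\lambda}}}>\frac{t^P_{2,z',\lambda}}{\sqrt{t^P_{3,z',\lambda}t^P_{1,z',\lambda}}},$$ then $\partial c_p^P(\lambda;z')/\partial\lambda>0$.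
   Context: Let $n\ge2$ and let $S=\{z_1,\dots,z_n\}$ be a training set. Let $L(z,\theta)>0$ be a loss differentiable in $\theta\in\mathbb{R}^p$. Set $p(z,\theta)=e^{-L(z,\theta)}$ and $f(z,\theta)=\ln\frac{p(z,\theta)}{1-p(z,\theta)}$. Let $\theta_S^*$ satisfy $\sum_i\nabla_\theta L(z_i,\theta_S^* )=0$. For each subset $A\subseteq S$, let $\theta_A^*$ be a fixed parameter vector. Fix $1\le a<n$, and let $D_a$ be the uniform distribution over the size-$a$ subsets of $S$. Let $J\in\mathbb{R}^{n\times p}$ have $i$-th row $\nabla_\theta L(z_i,\theta_S^* )^\top$, and let $F_S:=\frac1nJ^\top J$. Define $\alpha_{z',i}:=\mathbb{E}_{A\sim D_a}[f(z',\theta_A^* )\mid z_i\in A]-\mathbb{E}_{A\sim D_a}[f(z',\theta_A^* )]$ and $g_{z'}:=\frac1nJ^\top\alpha_{z'}$. *)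

theory Defs
  imports "HOL-Analysis.Analysis"
begin

definition grad :: "('a::real_inner \<Rightarrow> real) \<Rightarrow> 'a \<Rightarrow> 'a" where
  "grad g x = (THE D. (g has_derivative (\<lambda>h. h \<bullet> D)) (at x))"

definition probL :: "('z \<Rightarrow> 'p \<Rightarrow> real) \<Rightarrow> 'z \<Rightarrow> 'p \<Rightarrow> real" where
  "probL L z th = exp (- L z th)"

definition logitf :: "('z \<Rightarrow> 'p \<Rightarrow> real) \<Rightarrow> 'z \<Rightarrow> 'p \<Rightarrow> real" where
  "logitf L z th = ln (probL L z th / (1 - probL L z th))"

(* support of D_a: the size-a subsets of S *)
definition subsets_of_size :: "nat \<Rightarrow> 'a set \<Rightarrow> 'a set set" where
  "subsets_of_size a S = {A. A \<subseteq> S \<and> card A = a}"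

definition unif_exp :: "'b set \<Rightarrow> ('b \<Rightarrow> real) \<Rightarrow> real" where
  "unif_exp X g = (\<Sum>x\<in>X. g x) / real (card X)"

definition unif_var :: "'b set \<Rightarrow> ('b \<Rightarrow> real) \<Rightarrow> real" where
  "unif_var X g = unif_exp X (\<lambda>x. (g x - unif_exp X g)\<^sup>2)"

definition unif_cov :: "'b set \<Rightarrow> ('b \<Rightarrow> real) \<Rightarrow> ('b \<Rightarrow> real) \<Rightarrow> real" where
  "unif_cov X g h = unif_exp X (\<lambda>x. (g x - unif_exp X g) * (h x - unif_exp X h))"

definition pearson :: "'b set \<Rightarrow> ('b \<Rightarrow> real) \<Rightarrow> ('b \<Rightarrow> real) \<Rightarrow> real" where
  "pearson X g h = unif_cov X g h / sqrt (unif_var X g * unif_var X h)"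

definition matpow :: "real^'q^'q \<Rightarrow> nat \<Rightarrow> real^'q^'q" where
  "matpow M k = ((\<lambda>N. M ** N) ^^ k) (mat 1)"

end

theory Submission
  imports Defs
begin

(* Write B = J P, F = B^T B / n = P^T F_S P, R(mu) = (F + mu I)^-1 and N = (B B^T + n lam I)^-1.
   Since the gradients sum to zero, so do the attributions tau(mu, z_i), which form the vector
   v(mu) = -B R(mu) u.  For a zero-sum weight vector w, the subset sum over A ~ D_a has covariance
   with f proportional to <w, alpha> and variance proportional to |w|^2, so c(mu) is a fixed positive
   multiple of the cosine between v(mu) and alpha.  With m = R(lam) u and the push-through identity
   B R(lam) = n N B, the derivative of v at lam is n N B m, and the derivative of the cosine has the
   sign of X t_2 + r t_3 where X = <B m, N alpha>, t_2 = |B m|^2 / n, t_3 = <B m, N B m> and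
   o = <alpha, N alpha>.  Cauchy-Schwarz for the form N gives |X| <= sqrt (t_3 o), while the hypothesis
   is equivalent to r sqrt t_3 > t_2 sqrt o; hence X t_2 + r t_3 > 0. *)

declare transpose_matrix_vector [simp del]

section \<open>Sums over uniformly random subsets of fixed size\<close>

lemma card_supersets_of_size:
  assumes S: "finite S" and T: "T \<subseteq> S"
  shows "card {A \<in> subsets_of_size a S. T \<subseteq> A} =
    (if card T \<le> a then (card S - card T) choose (a - card T) else 0)"
proof (cases "card T \<le> a")
  case False
  have "card T \<le> card A" if "A \<subseteq> S" "T \<subseteq> A" for A
    using that S by (meson card_mono finite_subset)
  then have empty: "{A \<in> subsets_of_size a S. T \<subseteq> A} = {}"
    using False by (force simp: subsets_of_size_def)
  show ?thesis using False by (simp add: empty)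
next
  case True
  have fT: "finite T" using S T finite_subset by blast
  have "bij_betw (\<lambda>B. B \<union> T) (subsets_of_size (a - card T) (S - T))
      {A \<in> subsets_of_size a S. T \<subseteq> A}"
  proof (rule bij_betw_byWitness[where f' = "\<lambda>A. A - T"])
    show "(\<lambda>B. B \<union> T) ` subsets_of_size (a - card T) (S - T) \<subseteq> {A \<in> subsets_of_size a S. T \<subseteq> A}"
    proof
      fix A assume "A \<in> (\<lambda>B. B \<union> T) ` subsets_of_size (a - card T) (S - T)"
      then obtain B where B: "B \<subseteq> S - T" "card B = a - card T" and A: "A = B \<union> T"
        by (auto simp: subsets_of_size_def)
      have "finite B" using B(1) S finite_subset by blast
      then have "card A = card B + card T" using A B(1) fT by (auto intro: card_Un_disjoint)
      then show "A \<in> {A \<in> subsets_of_size a S. T \<subseteq> A}"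
        using A B T True by (auto simp: subsets_of_size_def)
    qed
    show "(\<lambda>A. A - T) ` {A \<in> subsets_of_size a S. T \<subseteq> A} \<subseteq> subsets_of_size (a - card T) (S - T)"
      using fT by (auto simp: subsets_of_size_def card_Diff_subset)
  qed (auto simp: subsets_of_size_def)
  then have "card {A \<in> subsets_of_size a S. T \<subseteq> A} = card (S - T) choose (a - card T)"
    using S by (simp flip: bij_betw_same_card add: subsets_of_size_def n_subsets)
  then show ?thesis using True card_Diff_subset[OF fT T] by simp
qed

lemma sum_subset_sums_swap:
  fixes w :: "'a \<Rightarrow> 'b::semiring_0"
  assumes S: "finite S" and \<A>: "\<A> \<subseteq> Pow S"
  shows "(\<Sum>A\<in>\<A>. sum w A * G A) = (\<Sum>x\<in>S. w x * (\<Sum>A\<in>{A \<in> \<A>. x \<in> A}. G A))"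
proof -
  have restrict: "{x \<in> S. x \<in> A} = A" if "A \<in> \<A>" for A using that \<A> by blast
  have "(\<Sum>A\<in>\<A>. sum w A * G A) = (\<Sum>A\<in>\<A>. \<Sum>x\<in>{x \<in> S. x \<in> A}. w x * G A)"
    by (intro sum.cong refl) (simp add: restrict sum_distrib_right)
  also have "\<dots> = (\<Sum>x\<in>S. \<Sum>A\<in>{A \<in> \<A>. x \<in> A}. w x * G A)"
    using S \<A> by (intro sum.swap_restrict) (auto intro: finite_subset)
  finally show ?thesis by (simp add: sum_distrib_left)
qed

lemma subsets_of_size_subset_Pow: "subsets_of_size a S \<subseteq> Pow S"
  by (auto simp: subsets_of_size_def)

lemma card_subsets_of_size: "finite S \<Longrightarrow> card (subsets_of_size a S) = card S choose a"
  by (simp add: subsets_of_size_def n_subsets)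

(* The left-hand side is the number of a-subsets of an n-set containing two given points; the case
   split is needed because a - 2 truncates to 0 when a = 1. *)
lemma pair_count_less_single_count:
  fixes n a :: nat assumes a_pos: "1 \<le> a" and a_less: "a < n"
  shows "(if 2 \<le> a then (n - 2) choose (a - 2) else 0) < (n - 1) choose (a - 1)"
proof (cases "2 \<le> a")
  case True
  then have "(n - 1) choose (a - 1) = Suc (n - 2) choose Suc (a - 2)"
    using a_less by (simp add: Suc_diff_Suc numeral_2_eq_2)
  also have "\<dots> = ((n - 2) choose (a - 2)) + ((n - 2) choose Suc (a - 2))"
    by simp
  finally show ?thesis using True a_less by simp
qed (use a_less in simp)

context
  fixes S :: "'a set" and a :: nat
  assumes finite_S: "finite S" and a_pos: "1 \<le> a" and a_less: "a < card S"
begin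

lemma card_subsets_containing:
  "x \<in> S \<Longrightarrow> card {A \<in> subsets_of_size a S. x \<in> A} = (card S - 1) choose (a - 1)"
  using card_supersets_of_size[OF finite_S, of "{x}" a] a_pos by simp

lemma card_subsets_containing_pair:
  assumes "x \<in> S" "y \<in> S" "x \<noteq> y"
  shows "card {A \<in> subsets_of_size a S. x \<in> A \<and> y \<in> A} =
    (if 2 \<le> a then (card S - 2) choose (a - 2) else 0)"
  using card_supersets_of_size[OF finite_S, of "{x, y}" a] assms by (simp add: numeral_2_eq_2)

lemma unif_exp_subset_sum:
  assumes "sum w S = 0"
  shows "unif_exp (subsets_of_size a S) (sum w) = 0"
proof -
  have "(\<Sum>A\<in>subsets_of_size a S. sum w A * 1) =
      (\<Sum>x\<in>S. w x * real ((card S - 1) choose (a - 1)))"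
    using sum_subset_sums_swap[OF finite_S subsets_of_size_subset_Pow, of w "\<lambda>_. 1"]
      card_subsets_containing by simp
  also have "\<dots> = 0" using assms by (simp flip: sum_distrib_right)
  finally show ?thesis by (simp add: unif_exp_def)
qed

lemma unif_cov_subset_sum:
  assumes "sum w S = 0"
  shows "unif_cov (subsets_of_size a S) F (sum w) =
    real ((card S - 1) choose (a - 1)) / real (card S choose a) *
    (\<Sum>x\<in>S. w x * (unif_exp {A \<in> subsets_of_size a S. x \<in> A} F - unif_exp (subsets_of_size a S) F))"
proof -
  define D where "D = subsets_of_size a S"
  define c1 where "c1 = real ((card S - 1) choose (a - 1))"
  have c1_pos: "c1 > 0" using pair_count_less_single_count[OF a_pos a_less] unfolding c1_def by linarith
  have conditional: "(\<Sum>A\<in>{A \<in> D. x \<in> A}. F A - unif_exp D F) =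
      c1 * (unif_exp {A \<in> D. x \<in> A} F - unif_exp D F)" if "x \<in> S" for x
    using card_subsets_containing[OF that] c1_pos
    by (simp add: D_def c1_def unif_exp_def sum_subtractf field_simps)
  have E0: "unif_exp D (sum w) = 0" using unif_exp_subset_sum[OF assms] by (simp add: D_def)
  have "unif_cov D F (sum w) = unif_exp D (\<lambda>A. sum w A * (F A - unif_exp D F))"
    unfolding unif_cov_def E0 by (simp add: mult.commute)
  also have "\<dots> = (\<Sum>A\<in>D. sum w A * (F A - unif_exp D F)) / real (card D)"
    by (simp add: unif_exp_def)
  also have "\<dots> = (\<Sum>x\<in>S. w x * (c1 * (unif_exp {A \<in> D. x \<in> A} F - unif_exp D F))) / real (card D)"
    unfolding D_def sum_subset_sums_swap[OF finite_S subsets_of_size_subset_Pow]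
    using conditional by (simp add: D_def)
  also have "\<dots> = c1 * (\<Sum>x\<in>S. w x * (unif_exp {A \<in> D. x \<in> A} F - unif_exp D F)) / real (card D)"
    by (simp add: sum_distrib_left mult_ac)
  finally show ?thesis
    using finite_S by (simp add: D_def c1_def card_subsets_of_size)
qed

lemma sum_subset_sums_containing:
  assumes "sum w S = 0" and "x \<in> S"
  shows "(\<Sum>A\<in>{A \<in> subsets_of_size a S. x \<in> A}. sum w A) =
    (real ((card S - 1) choose (a - 1)) - real (if 2 \<le> a then (card S - 2) choose (a - 2) else 0)) * w x"
proof -
  define D where "D = subsets_of_size a S"
  define c1 where "c1 = real ((card S - 1) choose (a - 1))"
  define c2 where "c2 = real (if 2 \<le> a then (card S - 2) choose (a - 2) else 0)"
  have count: "(\<Sum>A\<in>{A \<in> {A \<in> D. x \<in> A}. y \<in> A}. 1) = c2 + (if y = x then c1 - c2 else 0)"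
    if "y \<in> S" for y
  proof -
    have "{A \<in> {A \<in> D. x \<in> A}. y \<in> A} = {A \<in> D. x \<in> A \<and> y \<in> A}" by blast
    then show ?thesis
      using assms(2) that card_subsets_containing[of x] card_subsets_containing_pair[of x y]
      by (cases "y = x") (simp_all add: D_def c1_def c2_def)
  qed
  have "{A \<in> D. x \<in> A} \<subseteq> Pow S" using subsets_of_size_subset_Pow by (auto simp: D_def)
  then have "(\<Sum>A\<in>{A \<in> D. x \<in> A}. sum w A * 1) =
      (\<Sum>y\<in>S. w y * (\<Sum>A\<in>{A \<in> {A \<in> D. x \<in> A}. y \<in> A}. 1))"
    by (rule sum_subset_sums_swap[OF finite_S])
  also have "\<dots> = (\<Sum>y\<in>S. c2 * w y + (if y = x then (c1 - c2) * w x else 0))"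
    using count by (intro sum.cong) (auto simp: algebra_simps)
  also have "\<dots> = c2 * sum w S + (c1 - c2) * w x"
    using assms(2) finite_S by (simp add: sum.distrib sum_distrib_left)
  finally show ?thesis using assms(1) by (simp add: D_def c1_def c2_def)
qed

lemma unif_var_subset_sum:
  assumes "sum w S = 0"
  shows "unif_var (subsets_of_size a S) (sum w) =
    (real ((card S - 1) choose (a - 1)) - real (if 2 \<le> a then (card S - 2) choose (a - 2) else 0))
      / real (card S choose a) * (\<Sum>x\<in>S. (w x)\<^sup>2)"
proof -
  define D where "D = subsets_of_size a S"
  define c where "c = real ((card S - 1) choose (a - 1)) - real (if 2 \<le> a then (card S - 2) choose (a - 2) else 0)"
  have "(\<Sum>A\<in>D. sum w A * sum w A) = (\<Sum>x\<in>S. w x * (c * w x))"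
    unfolding D_def sum_subset_sums_swap[OF finite_S subsets_of_size_subset_Pow]
    using sum_subset_sums_containing[OF assms] by (simp add: c_def)
  also have "\<dots> = c * (\<Sum>x\<in>S. (w x)\<^sup>2)"
    by (simp add: sum_distrib_left power2_eq_square mult_ac)
  finally have sq: "(\<Sum>A\<in>D. sum w A * sum w A) = c * (\<Sum>x\<in>S. (w x)\<^sup>2)" .
  have E0: "unif_exp D (sum w) = 0" using unif_exp_subset_sum[OF assms] by (simp add: D_def)
  have "unif_var D (sum w) = (\<Sum>A\<in>D. sum w A * sum w A) / real (card D)"
    unfolding unif_var_def E0 by (simp add: unif_exp_def power2_eq_square)
  then show ?thesis
    unfolding sq using finite_S by (simp add: D_def c_def card_subsets_of_size)
qed

lemma pearson_subset_sum:
  assumes var_pos: "unif_var (subsets_of_size a S) F > 0"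
  shows "\<exists>\<kappa>>0. \<forall>w. sum w S = 0 \<longrightarrow>
    pearson (subsets_of_size a S) F (sum w) =
      \<kappa> * (\<Sum>x\<in>S. w x * (unif_exp {A \<in> subsets_of_size a S. x \<in> A} F - unif_exp (subsets_of_size a S) F))
        / sqrt (\<Sum>x\<in>S. (w x)\<^sup>2)"
proof -
  define N where "N = real (card S choose a)"
  define c1 where "c1 = real ((card S - 1) choose (a - 1))"
  define c2 where "c2 = real (if 2 \<le> a then (card S - 2) choose (a - 2) else 0)"
  define \<kappa> where "\<kappa> = c1 / N / sqrt (unif_var (subsets_of_size a S) F * ((c1 - c2) / N))"
  have "N > 0" using a_less by (simp add: N_def)
  moreover have "c2 < c1" "0 \<le> c2"
    using pair_count_less_single_count[OF a_pos a_less] by (simp_all add: c1_def c2_def)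
  ultimately have "\<kappa> > 0" using var_pos by (simp add: \<kappa>_def)
  moreover have "pearson (subsets_of_size a S) F (sum w) =
      \<kappa> * (\<Sum>x\<in>S. w x * (unif_exp {A \<in> subsets_of_size a S. x \<in> A} F - unif_exp (subsets_of_size a S) F))
        / sqrt (\<Sum>x\<in>S. (w x)\<^sup>2)" (is "_ = \<kappa> * ?X / sqrt ?Y") if "sum w S = 0" for w
  proof -
    have cov: "unif_cov (subsets_of_size a S) F (sum w) = c1 / N * ?X"
      using unif_cov_subset_sum[OF that] by (simp add: c1_def N_def)
    have var: "unif_var (subsets_of_size a S) (sum w) = (c1 - c2) / N * ?Y"
      using unif_var_subset_sum[OF that] by (simp add: c1_def c2_def N_def)
    have "sqrt (unif_var (subsets_of_size a S) F * ((c1 - c2) / N * ?Y)) =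
        sqrt (unif_var (subsets_of_size a S) F * ((c1 - c2) / N)) * sqrt ?Y"
      by (simp only: real_sqrt_mult mult.assoc)
    then show ?thesis by (simp add: pearson_def cov var \<kappa>_def)
  qed
  ultimately show ?thesis by blast
qed

end

lemma pearson_subset_sum_vec:
  fixes z :: "'n::finite \<Rightarrow> 'a"
  assumes inj: "inj z" and a: "1 \<le> a" "a < CARD('n)"
    and var_pos: "unif_var (subsets_of_size a (range z)) F > 0"
  defines "\<beta> \<equiv> \<chi> i. unif_exp {A \<in> subsets_of_size a (range z). z i \<in> A} F
                     - unif_exp (subsets_of_size a (range z)) F"
  shows "\<exists>\<kappa>>0. \<forall>w. (\<Sum>i\<in>UNIV. w (z i)) = 0 \<longrightarrow>
    pearson (subsets_of_size a (range z)) F (sum w) = \<kappa> * (((\<chi> i. w (z i)) \<bullet> \<beta>) / norm (\<chi> i. w (z i)))"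
proof -
  have reindex: "sum g (range z) = (\<Sum>i\<in>UNIV. g (z i))" for g :: "'a \<Rightarrow> real"
    using sum.reindex[OF inj] by simp
  have "card (range z) = CARD('n)" using card_image[OF inj] by simp
  then obtain \<kappa> where "\<kappa> > 0" and \<kappa>: "\<And>w. sum w (range z) = 0 \<Longrightarrow>
      pearson (subsets_of_size a (range z)) F (sum w) =
        \<kappa> * (\<Sum>x\<in>range z. w x * (unif_exp {A \<in> subsets_of_size a (range z). x \<in> A} F
                                  - unif_exp (subsets_of_size a (range z)) F))
          / sqrt (\<Sum>x\<in>range z. (w x)\<^sup>2)"
    using pearson_subset_sum[of "range z" a F] a var_pos by auto
  have "pearson (subsets_of_size a (range z)) F (sum w) = \<kappa> * (((\<chi> i. w (z i)) \<bullet> \<beta>) / norm (\<chi> i. w (z i)))"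
    if "(\<Sum>i\<in>UNIV. w (z i)) = 0" for w
    using \<kappa>[of w] that
    by (simp add: reindex \<beta>_def inner_vec_def norm_eq_sqrt_inner power2_eq_square)
  with \<open>\<kappa> > 0\<close> show ?thesis by blast
qed

section \<open>Coercive matrices and their resolvents\<close>

lemma inner_matrix_vector_transpose: "x \<bullet> (A *v y) = (transpose A *v x) \<bullet> (y::real^'a)"
  by (simp add: dot_lmul_matrix transpose_matrix_vector)

lemma matrix_vector_inner_transpose: "(A *v x) \<bullet> y = x \<bullet> (transpose A *v (y::real^'a))"
  by (metis inner_matrix_vector_transpose inner_commute)

lemma scaleR_mat_1_mult_vector [simp]: "(c *\<^sub>R mat 1) *v x = c *\<^sub>R (x::real^'a)"
  by (simp add: scaleR_matrix_vector_assoc[symmetric])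

lemma matpow_Suc_mult_vector: "matpow M (Suc k) *v x = M *v (matpow M k *v x)"
  by (simp add: matpow_def matrix_vector_mul_assoc)

lemma matpow_0: "matpow M 0 = mat 1"
  by (simp add: matpow_def)

lemma matrix_inv_coercive:
  fixes M :: "real^'k^'k"
  assumes c: "c > 0" and coercive: "\<And>x. c * (x \<bullet> x) \<le> x \<bullet> (M *v x)"
  shows "M *v (matrix_inv M *v y) = y" "matrix_inv M *v (M *v y) = y"
    "norm (matrix_inv M *v y) \<le> norm y / c"
proof -
  have "inj (\<lambda>x. M *v x)"
  proof (rule injI)
    fix x x' assume "M *v x = M *v x'"
    then have "c * ((x - x') \<bullet> (x - x')) \<le> 0"
      using coercive[of "x - x'"] by (simp add: matrix_vector_mult_diff_distrib)
    then have "(x - x') \<bullet> (x - x') \<le> 0" using c by (simp add: mult_le_0_iff)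
    then show "x = x'" by (metis inner_gt_zero_iff not_le right_minus_eq)
  qed
  then have "invertible M" using matrix_left_invertible_injective invertible_left_inverse by blast
  then have "M ** matrix_inv M = mat 1 \<and> matrix_inv M ** M = mat 1"
    unfolding invertible_def matrix_inv_def by (rule someI_ex)
  then show inv: "M *v (matrix_inv M *v y) = y" "matrix_inv M *v (M *v y) = y"
    by (simp_all add: matrix_vector_mul_assoc)
  define x where "x = matrix_inv M *v y"
  have "c * (norm x)\<^sup>2 \<le> x \<bullet> y"
    using coercive[of x] inv(1) by (simp add: x_def power2_norm_eq_inner)
  also have "\<dots> \<le> norm x * norm y" by (rule norm_cauchy_schwarz)
  finally have "c * norm x \<le> norm y"
    by (cases "norm x = 0") (auto simp: power2_eq_square mult_le_cancel_right)
  then show "norm (matrix_inv M *v y) \<le> norm y / c" using c by (simp add: x_def field_simps)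
qed

lemma matrix_inv_symmetric:
  fixes M :: "real^'k^'k"
  assumes "c > 0" and "\<And>x. c * (x \<bullet> x) \<le> x \<bullet> (M *v x)"
    and sym: "\<And>x y. x \<bullet> (M *v y) = (M *v x) \<bullet> y"
  shows "x \<bullet> (matrix_inv M *v y) = (matrix_inv M *v x) \<bullet> y"
  using sym[of "matrix_inv M *v x" "matrix_inv M *v y"] matrix_inv_coercive(1)[OF assms(1,2)]
  by simp

lemma matrix_inv_positive:
  fixes M :: "real^'k^'k"
  assumes c: "c > 0" and coercive: "\<And>x. c * (x \<bullet> x) \<le> x \<bullet> (M *v x)" and "w \<noteq> 0"
  shows "w \<bullet> (matrix_inv M *v w) > 0"
proof -
  define x where "x = matrix_inv M *v w"
  have Mx: "M *v x = w" using matrix_inv_coercive(1)[OF c coercive] by (simp add: x_def)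
  then have "x \<noteq> 0" using \<open>w \<noteq> 0\<close> by auto
  then have "0 < c * (x \<bullet> x)" using c by simp
  also have "\<dots> \<le> x \<bullet> (M *v x)" by (rule coercive)
  finally show ?thesis using Mx by (simp add: x_def inner_commute)
qed

lemma cauchy_schwarz_psd:
  fixes Q :: "real^'k^'k"
  assumes sym: "\<And>x y. x \<bullet> (Q *v y) = (Q *v x) \<bullet> y" and psd: "\<And>x. 0 \<le> x \<bullet> (Q *v x)"
  shows "(x \<bullet> (Q *v y))\<^sup>2 \<le> (x \<bullet> (Q *v x)) * (y \<bullet> (Q *v y))"
proof -
  define A b C where "A = x \<bullet> (Q *v x)" and "b = x \<bullet> (Q *v y)" and "C = y \<bullet> (Q *v y)"
  have quad: "0 \<le> A + 2 * s * b + s * s * C" for s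
  proof -
    have "0 \<le> (x + s *\<^sub>R y) \<bullet> (Q *v (x + s *\<^sub>R y))" by (rule psd)
    also have "\<dots> = A + 2 * s * b + s * s * C"
      using sym[of y x] unfolding A_def b_def C_def
      by (simp add: matrix_vector_right_distrib matrix_vector_mult_scaleR inner_add_left
          inner_add_right inner_commute algebra_simps)
    finally show ?thesis .
  qed
  have "b\<^sup>2 \<le> A * C"
  proof (cases "C = 0")
    case True
    have "b = 0"
    proof (rule ccontr)
      assume "b \<noteq> 0"
      then have "A + 2 * (- (A + 1) / (2 * b)) * b + 0 = -1" by (simp add: field_simps)
      then show False using quad[of "- (A + 1) / (2 * b)"] True by simp
    qed
    then show ?thesis using True by simp
  next
    case False
    then have "C > 0" using psd[of y] by (simp add: C_def)
    have "0 \<le> A + 2 * (- b / C) * b + (- b / C) * (- b / C) * C" by (rule quad)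
    also have "\<dots> = A - b\<^sup>2 / C" using \<open>C > 0\<close> by (simp add: field_simps power2_eq_square)
    finally show ?thesis using \<open>C > 0\<close> by (simp add: field_simps)
  qed
  then show ?thesis by (simp add: A_def b_def C_def)
qed

lemma shift_coercive:
  fixes F :: "real^'k^'k"
  assumes "\<And>x. 0 \<le> x \<bullet> (F *v x)"
  shows "\<mu> * (x \<bullet> x) \<le> x \<bullet> ((F + \<mu> *\<^sub>R mat 1) *v x)"
  using assms[of x] by (simp add: matrix_vector_mult_add_rdistrib inner_add_right)

lemma resolvent_identity:
  fixes F :: "real^'k^'k"
  assumes psd: "\<And>x. 0 \<le> x \<bullet> (F *v x)" and \<mu>: "\<mu> > 0" and lam: "lam > 0"
  shows "matrix_inv (F + \<mu> *\<^sub>R mat 1) *v y - matrix_inv (F + lam *\<^sub>R mat 1) *v y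
     = (lam - \<mu>) *\<^sub>R (matrix_inv (F + \<mu> *\<^sub>R mat 1) *v (matrix_inv (F + lam *\<^sub>R mat 1) *v y))"
proof -
  let ?M = "\<lambda>t. F + t *\<^sub>R mat 1"
  let ?R = "\<lambda>t. matrix_inv (?M t)"
  note inv\<mu> = matrix_inv_coercive[OF \<mu> shift_coercive[OF psd]]
  note invlam = matrix_inv_coercive[OF lam shift_coercive[OF psd]]
  have Mx: "?M \<mu> *v x = ?M lam *v x + (\<mu> - lam) *\<^sub>R x" for x
    by (simp add: matrix_vector_mult_add_rdistrib algebra_simps)
  have "?M \<mu> *v (?R \<mu> *v y - ?R lam *v y) = y - (y + (\<mu> - lam) *\<^sub>R (?R lam *v y))"
    using inv\<mu>(1) invlam(1) Mx by (simp add: matrix_vector_mult_diff_distrib)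
  also have "\<dots> = ?M \<mu> *v ((lam - \<mu>) *\<^sub>R (?R \<mu> *v (?R lam *v y)))"
    using inv\<mu>(1) by (simp add: matrix_vector_mult_scaleR algebra_simps)
  finally have "?R \<mu> *v (?M \<mu> *v (?R \<mu> *v y - ?R lam *v y)) =
      ?R \<mu> *v (?M \<mu> *v ((lam - \<mu>) *\<^sub>R (?R \<mu> *v (?R lam *v y))))"
    by simp
  then show ?thesis using inv\<mu>(2) by simp
qed

lemma resolvent_second_order:
  fixes F :: "real^'k^'k"
  assumes psd: "\<And>x. 0 \<le> x \<bullet> (F *v x)" and \<mu>: "\<mu> > 0" and lam: "lam > 0"
  defines "R \<equiv> \<lambda>t. matrix_inv (F + t *\<^sub>R mat 1)"
  shows "R \<mu> *v y - R lam *v y + (\<mu> - lam) *\<^sub>R (R lam *v (R lam *v y))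
     = (\<mu> - lam)\<^sup>2 *\<^sub>R (R \<mu> *v (R lam *v (R lam *v y)))"
proof -
  have "R \<mu> *v y - R lam *v y + (\<mu> - lam) *\<^sub>R (R lam *v (R lam *v y))
      = (lam - \<mu>) *\<^sub>R (R \<mu> *v (R lam *v y) - R lam *v (R lam *v y))"
    using resolvent_identity[OF psd \<mu> lam, of y] by (simp add: R_def algebra_simps)
  also have "\<dots> = (lam - \<mu>) *\<^sub>R ((lam - \<mu>) *\<^sub>R (R \<mu> *v (R lam *v (R lam *v y))))"
    using resolvent_identity[OF psd \<mu> lam, of "R lam *v y"] by (simp add: R_def)
  also have "\<dots> = (\<mu> - lam)\<^sup>2 *\<^sub>R (R \<mu> *v (R lam *v (R lam *v y)))"
  proof -
    have "(lam - \<mu>) * (lam - \<mu>) = (\<mu> - lam)\<^sup>2" by (simp add: power2_eq_square algebra_simps)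
    then show ?thesis by simp
  qed
  finally show ?thesis .
qed

lemma resolvent_remainder_bound:
  fixes F :: "real^'k^'k"
  assumes psd: "\<And>x. 0 \<le> x \<bullet> (F *v x)" and lam: "lam > 0" and \<mu>: "\<mu> > lam / 2"
  defines "R \<equiv> \<lambda>t. matrix_inv (F + t *\<^sub>R mat 1)"
  shows "norm (R \<mu> *v y - R lam *v y + (\<mu> - lam) *\<^sub>R (R lam *v (R lam *v y)))
     \<le> (\<mu> - lam)\<^sup>2 * (2 * norm (R lam *v (R lam *v y)) / lam)"
proof -
  define z where "z = R lam *v (R lam *v y)"
  have "\<mu> > 0" using lam \<mu> by simp
  have "norm (R \<mu> *v z) \<le> norm z / \<mu>"
    unfolding R_def by (rule matrix_inv_coercive(3)[OF \<open>\<mu> > 0\<close> shift_coercive[OF psd]])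
  also have "\<dots> \<le> norm z / (lam / 2)"
    using \<mu> lam by (intro divide_left_mono) auto
  also have "\<dots> = 2 * norm z / lam" by simp
  finally have "(\<mu> - lam)\<^sup>2 * norm (R \<mu> *v z) \<le> (\<mu> - lam)\<^sup>2 * (2 * norm z / lam)"
    by (rule mult_left_mono) simp
  then show ?thesis
    using resolvent_second_order[OF psd \<open>\<mu> > 0\<close> lam, of y] by (simp add: R_def z_def)
qed

lemma resolvent_has_vector_derivative:
  fixes F :: "real^'k^'k"
  assumes psd: "\<And>x. 0 \<le> x \<bullet> (F *v x)" and lam: "lam > 0"
  defines "R \<equiv> \<lambda>t. matrix_inv (F + t *\<^sub>R mat 1)"
  shows "((\<lambda>\<mu>. R \<mu> *v y) has_vector_derivative - (R lam *v (R lam *v y))) (at lam)"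
proof -
  define z where "z = R lam *v (R lam *v y)"
  define K where "K = 2 * norm z / lam"
  have "\<forall>\<^sub>F \<mu> in at lam. \<mu> \<in> {lam/2<..}"
    using lam by (intro eventually_at_in_open') auto
  then have small: "\<forall>\<^sub>F \<mu> in at lam.
      norm (norm (R \<mu> *v y - R lam *v y - (\<mu> - lam) *\<^sub>R (- z)) / norm (\<mu> - lam)) \<le> norm (\<mu> - lam) * K"
  proof (rule eventually_mono)
    fix \<mu> assume "\<mu> \<in> {lam/2<..}"
    then have bound: "norm (R \<mu> *v y - R lam *v y - (\<mu> - lam) *\<^sub>R (- z)) \<le> \<bar>\<mu> - lam\<bar> * \<bar>\<mu> - lam\<bar> * K"
      using resolvent_remainder_bound[OF psd lam, of \<mu> y]
      by (simp add: R_def z_def K_def power2_eq_square)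
    show "norm (norm (R \<mu> *v y - R lam *v y - (\<mu> - lam) *\<^sub>R (- z)) / norm (\<mu> - lam)) \<le> norm (\<mu> - lam) * K"
    proof (cases "\<mu> = lam")
      case False
      then show ?thesis using bound by (simp add: divide_le_eq mult_ac)
    qed simp
  qed
  have "((\<lambda>\<mu>. \<mu> - lam) \<longlongrightarrow> 0) (at lam)"
    by (intro tendsto_eq_intros) auto
  then have "((\<lambda>\<mu>. norm (R \<mu> *v y - R lam *v y - (\<mu> - lam) *\<^sub>R (- z)) / norm (\<mu> - lam)) \<longlongrightarrow> 0) (at lam)"
    by (rule tendsto_0_le[OF _ small])
  then show ?thesis
    unfolding has_vector_derivative_def has_derivative_iff_norm z_def
    using bounded_linear_minus[OF bounded_linear_scaleR_left] by simp
qed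

lemma has_real_derivative_inner_div_norm:
  fixes V :: "real \<Rightarrow> 'a::real_inner"
  assumes dV: "(V has_vector_derivative V') (at x)" and nz: "V x \<noteq> 0"
  shows "((\<lambda>\<mu>. (V \<mu> \<bullet> w) / norm (V \<mu>)) has_real_derivative
    ((V' \<bullet> w) * (V x \<bullet> V x) - (V x \<bullet> w) * (V x \<bullet> V')) / norm (V x) ^ 3) (at x)"
proof -
  have num: "((\<lambda>\<mu>. V \<mu> \<bullet> w) has_real_derivative V' \<bullet> w) (at x)"
    using bounded_linear.has_vector_derivative[OF bounded_linear_inner_left dV]
    by (simp add: has_real_derivative_iff_has_vector_derivative)
  have sq: "((\<lambda>\<mu>. V \<mu> \<bullet> V \<mu>) has_real_derivative 2 * (V x \<bullet> V')) (at x)"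
    using has_derivative_inner[OF dV[unfolded has_vector_derivative_def] dV[unfolded has_vector_derivative_def]]
    by (simp add: has_field_derivative_def inner_commute algebra_simps mult_commute_abs)
  have pos: "0 < V x \<bullet> V x" using nz by simp
  have "((\<lambda>\<mu>. sqrt (V \<mu> \<bullet> V \<mu>)) has_real_derivative
      inverse (sqrt (V x \<bullet> V x)) / 2 * (2 * (V x \<bullet> V'))) (at x)"
    by (rule DERIV_chain2[OF DERIV_real_sqrt[OF pos] sq])
  then have den: "((\<lambda>\<mu>. norm (V \<mu>)) has_real_derivative (V x \<bullet> V') / norm (V x)) (at x)"
    unfolding norm_eq_sqrt_inner[symmetric] by (simp add: field_simps)
  have quotient: "(a * n - b * (c / n)) / (n * n) = (a * (n * n) - b * c) / n ^ 3" if "n \<noteq> 0"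
    for a b c n :: real
    using that by (simp add: field_simps power3_eq_cube)
  have norm_nz: "norm (V x) \<noteq> 0" using nz by simp
  have "V x \<bullet> V x = norm (V x) * norm (V x)"
    by (metis dot_square_norm power2_eq_square)
  then show ?thesis
    by (intro DERIV_cong[OF DERIV_divide[OF num den norm_nz]]) (simp only: quotient[OF norm_nz])
qed

lemma ratio_gap_imp_pos:
  fixes X r t1 t2 t3 ov :: real
  assumes t1: "0 < t1" and t2: "0 < t2" and t3: "0 < t3" and ov: "0 < ov"
    and cs: "X\<^sup>2 \<le> t3 * ov" and gap: "t2 / sqrt (t3 * t1) < r / sqrt (ov * t1)"
  shows "0 < X * t2 + r * t3"
proof -
  have "t2 * sqrt ov < r * sqrt t3"
    using gap t1 t3 ov by (simp add: real_sqrt_mult field_simps)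
  then have upper: "sqrt t3 * (t2 * sqrt ov) < r * t3"
    using t3 mult_strict_left_mono[of "t2 * sqrt ov" "r * sqrt t3" "sqrt t3"]
    by (simp add: mult.left_commute)
  have "\<bar>X\<bar> \<le> sqrt t3 * sqrt ov"
    using real_sqrt_le_mono[OF cs] by (simp add: real_sqrt_mult)
  then have lower: "- (sqrt t3 * (t2 * sqrt ov)) \<le> X * t2"
    using t2 mult_right_mono[of "- (sqrt t3 * sqrt ov)" X t2] by (simp add: mult_ac)
  from upper lower show ?thesis by linarith
qed

section \<open>Resolvents of a Gram matrix\<close>

lemma inner_gram_matrix: "x \<bullet> ((transpose B ** B) *v y) = (B *v x) \<bullet> (B *v (y::real^'a))"
  by (metis inner_matrix_vector_transpose matrix_vector_mul_assoc transpose_transpose)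

(* In the application B = J P and n is the number of training points, so that F = P^T F_S P. *)
locale gram_resolvent =
  fixes B :: "real^'q^'n" and n lam :: real
  assumes n_pos: "n > 0" and lam_pos: "lam > 0"
begin

definition F :: "real^'q^'q" where "F = (1 / n) *\<^sub>R (transpose B ** B)"

definition R :: "real \<Rightarrow> real^'q^'q" where "R \<mu> = matrix_inv (F + \<mu> *\<^sub>R mat 1)"

definition N :: "real^'n^'n" where "N = matrix_inv (B ** transpose B + (n * lam) *\<^sub>R mat 1)"

lemma inner_F: "x \<bullet> (F *v y) = (1 / n) * ((B *v x) \<bullet> (B *v y))"
  by (simp add: F_def scaleR_matrix_vector_assoc[symmetric] inner_gram_matrix)

lemma F_psd: "0 \<le> x \<bullet> (F *v x)"
  using n_pos by (simp add: inner_F)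

lemma F_symmetric: "x \<bullet> (F *v y) = (F *v x) \<bullet> y"
  by (simp add: inner_F inner_commute)

lemma shifted_F_coercive: "\<mu> * (x \<bullet> x) \<le> x \<bullet> ((F + \<mu> *\<^sub>R mat 1) *v x)"
  by (rule shift_coercive[OF F_psd])

lemma R_inverse: "\<mu> > 0 \<Longrightarrow> (F + \<mu> *\<^sub>R mat 1) *v (R \<mu> *v y) = y"
  unfolding R_def by (rule matrix_inv_coercive(1)[OF _ shifted_F_coercive])

lemma R_symmetric: "\<mu> > 0 \<Longrightarrow> x \<bullet> (R \<mu> *v y) = (R \<mu> *v x) \<bullet> y"
  unfolding R_def
  by (rule matrix_inv_symmetric[OF _ shifted_F_coercive])
     (simp_all add: matrix_vector_mult_add_rdistrib inner_add_left inner_add_right F_symmetric)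

lemma R_F_commute:
  assumes \<mu>: "\<mu> > 0"
  shows "R \<mu> *v (F *v x) = F *v (R \<mu> *v x)"
proof -
  note inv = matrix_inv_coercive[OF \<mu> shifted_F_coercive, folded R_def]
  have "(F + \<mu> *\<^sub>R mat 1) *v (F *v v) = F *v ((F + \<mu> *\<^sub>R mat 1) *v v)" for v
    by (simp add: matrix_vector_mult_add_rdistrib matrix_vector_right_distrib matrix_vector_mult_scaleR)
  then have "R \<mu> *v (F *v x) = R \<mu> *v ((F + \<mu> *\<^sub>R mat 1) *v (F *v (R \<mu> *v x)))"
    using inv(1)[of x] by simp
  then show ?thesis using inv(2) by simp
qed

lemma shifted_dual_gram_coercive: "(n * lam) * (x \<bullet> x) \<le> x \<bullet> ((B ** transpose B + (n * lam) *\<^sub>R mat 1) *v x)"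
  using inner_gram_matrix[of x "transpose B" x]
  by (simp add: matrix_vector_mult_add_rdistrib inner_add_right)

lemma N_symmetric: "x \<bullet> (N *v y) = (N *v x) \<bullet> y"
  using n_pos lam_pos inner_gram_matrix[of _ "transpose B"] unfolding N_def
  by (intro matrix_inv_symmetric[OF _ shifted_dual_gram_coercive])
     (simp_all add: matrix_vector_mult_add_rdistrib inner_add_left inner_add_right inner_commute)

lemma N_positive: "x \<noteq> 0 \<Longrightarrow> 0 < x \<bullet> (N *v x)"
  using n_pos lam_pos unfolding N_def by (intro matrix_inv_positive[OF _ shifted_dual_gram_coercive]) auto

lemma N_psd: "0 \<le> x \<bullet> (N *v x)"
  using N_positive[of x] by (cases "x = 0") auto

lemma push_through: "B *v (R lam *v y) = n *\<^sub>R (N *v (B *v y))"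
proof -
  have "(B ** transpose B + (n * lam) *\<^sub>R mat 1) *v (B *v (R lam *v y))
      = n *\<^sub>R (B *v ((F + lam *\<^sub>R mat 1) *v (R lam *v y)))"
    using n_pos
    by (simp add: F_def matrix_vector_mult_add_rdistrib matrix_vector_right_distrib
        matrix_vector_mul_assoc[symmetric] scaleR_matrix_vector_assoc[symmetric] matrix_vector_mult_scaleR
        scaleR_add_right)
  also have "\<dots> = (B ** transpose B + (n * lam) *\<^sub>R mat 1) *v (n *\<^sub>R (N *v (B *v y)))"
    using R_inverse[OF lam_pos] matrix_inv_coercive(1)[OF _ shifted_dual_gram_coercive] n_pos lam_pos
    by (simp add: N_def matrix_vector_mult_scaleR)
  finally show ?thesis
    using matrix_inv_coercive(2)[OF _ shifted_dual_gram_coercive] n_pos lam_pos by (metis mult_pos_pos)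
qed

lemma has_vector_derivative_B_R:
  "((\<lambda>\<mu>. B *v (R \<mu> *v u)) has_vector_derivative - (n *\<^sub>R (N *v (B *v (R lam *v u))))) (at lam)"
proof -
  have "((\<lambda>\<mu>. R \<mu> *v u) has_vector_derivative - (R lam *v (R lam *v u))) (at lam)"
    unfolding R_def by (rule resolvent_has_vector_derivative[OF F_psd lam_pos])
  from bounded_linear.has_vector_derivative[OF matrix_vector_mul_bounded_linear[of B] this]
  show ?thesis using push_through[of "R lam *v u"] by (simp add: vec.neg)
qed

lemma B_R_nonzero:
  assumes "F *v u \<noteq> 0"
  shows "B *v (R lam *v u) \<noteq> 0"
proof
  assume "B *v (R lam *v u) = 0"
  then have "F *v (R lam *v u) = 0"
    by (simp add: F_def scaleR_matrix_vector_assoc[symmetric] matrix_vector_mul_assoc[symmetric])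
  then have "F *v ((F + lam *\<^sub>R mat 1) *v (R lam *v u)) = 0"
    by (simp add: matrix_vector_mult_add_rdistrib matrix_vector_right_distrib matrix_vector_mult_scaleR)
  then show False using assms R_inverse[OF lam_pos] by simp
qed

lemma resolvent_moment_2:
  "u \<bullet> (matpow (R lam) 2 *v (F *v u)) = (1 / n) * ((B *v (R lam *v u)) \<bullet> (B *v (R lam *v u)))"
proof -
  have "u \<bullet> (matpow (R lam) 2 *v (F *v u)) = (R lam *v u) \<bullet> (R lam *v (F *v u))"
    using R_symmetric[OF lam_pos]
    by (simp add: numeral_eq_Suc matpow_Suc_mult_vector matpow_0)
  also have "\<dots> = (R lam *v u) \<bullet> (F *v (R lam *v u))"
    by (simp add: R_F_commute[OF lam_pos])
  finally show ?thesis by (simp add: inner_F)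
qed

lemma resolvent_moment_3:
  "u \<bullet> (matpow (R lam) 3 *v (F *v u)) = (B *v (R lam *v u)) \<bullet> (N *v (B *v (R lam *v u)))"
proof -
  have "u \<bullet> (matpow (R lam) 3 *v (F *v u)) = (R lam *v (R lam *v u)) \<bullet> (R lam *v (F *v u))"
    using R_symmetric[OF lam_pos]
    by (simp add: numeral_eq_Suc matpow_Suc_mult_vector matpow_0)
  also have "\<dots> = (1 / n) * ((B *v (R lam *v (R lam *v u))) \<bullet> (B *v (R lam *v u)))"
    by (simp add: R_F_commute[OF lam_pos] inner_F)
  finally show ?thesis
    using n_pos by (simp add: push_through[of "R lam *v u"] inner_commute)
qed

lemma resolvent_moment_1_ge:
  "lam * ((1 / n) * ((B *v (R lam *v u)) \<bullet> (B *v (R lam *v u))))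
     \<le> u \<bullet> (matpow (R lam) 1 *v (F *v u))"
proof -
  define m where "m = R lam *v u"
  have "u \<bullet> (matpow (R lam) 1 *v (F *v u)) = ((F + lam *\<^sub>R mat 1) *v m) \<bullet> (F *v m)"
    using R_inverse[OF lam_pos, of u]
    by (simp add: m_def matpow_Suc_mult_vector matpow_0 R_F_commute[OF lam_pos])
  also have "\<dots> = (F *v m) \<bullet> (F *v m) + lam * (m \<bullet> (F *v m))"
    by (simp add: matrix_vector_mult_add_rdistrib inner_add_left)
  also have "\<dots> = (F *v m) \<bullet> (F *v m) + lam * ((1 / n) * ((B *v m) \<bullet> (B *v m)))"
    by (simp only: inner_F[of m m])
  finally show ?thesis by (simp add: m_def)
qed

lemma resolvent_inner_transpose:
  "u \<bullet> (R lam *v ((1 / n) *\<^sub>R (transpose B *v \<alpha>))) = (1 / n) * ((B *v (R lam *v u)) \<bullet> \<alpha>)"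
proof -
  have "u \<bullet> (R lam *v ((1 / n) *\<^sub>R (transpose B *v \<alpha>))) =
      (R lam *v u) \<bullet> ((1 / n) *\<^sub>R (transpose B *v \<alpha>))"
    by (rule R_symmetric[OF lam_pos])
  then show ?thesis by (simp flip: matrix_vector_inner_transpose)
qed

lemma has_real_derivative_cosine:
  assumes "F *v u \<noteq> 0"
  defines "w \<equiv> B *v (R lam *v u)"
  shows "((\<lambda>\<mu>. (- (B *v (R \<mu> *v u))) \<bullet> \<alpha> / norm (- (B *v (R \<mu> *v u)))) has_real_derivative
    n * ((w \<bullet> (N *v \<alpha>)) * (w \<bullet> w) - (w \<bullet> \<alpha>) * (w \<bullet> (N *v w))) / norm w ^ 3) (at lam)"
proof -
  have "((\<lambda>\<mu>. - (B *v (R \<mu> *v u))) has_vector_derivative n *\<^sub>R (N *v w)) (at lam)"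
    using has_vector_derivative_minus[OF has_vector_derivative_B_R[of u]] by (simp add: w_def)
  moreover have "- w \<noteq> 0" using B_R_nonzero[OF assms(1)] by (simp add: w_def)
  ultimately have "((\<lambda>\<mu>. (- (B *v (R \<mu> *v u))) \<bullet> \<alpha> / norm (- (B *v (R \<mu> *v u)))) has_real_derivative
      ((n *\<^sub>R (N *v w) \<bullet> \<alpha>) * (- w \<bullet> - w) - (- w \<bullet> \<alpha>) * (- w \<bullet> n *\<^sub>R (N *v w))) / norm (- w) ^ 3)
      (at lam)"
    unfolding w_def by (rule has_real_derivative_inner_div_norm)
  then show ?thesis by (simp add: N_symmetric[of w] inner_commute[of \<alpha>] algebra_simps)
qed

lemma cosine_derivative_pos:
  fixes u :: "real^'q" and \<alpha> :: "real^'n"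
  defines "t \<equiv> \<lambda>k. u \<bullet> (matpow (R lam) k *v (F *v u))"
    and "r \<equiv> - (u \<bullet> (R lam *v ((1 / n) *\<^sub>R (transpose B *v \<alpha>))))"
    and "ov \<equiv> \<alpha> \<bullet> (N *v \<alpha>)"
  assumes Fu: "F *v u \<noteq> 0" and \<alpha>: "\<alpha> \<noteq> 0"
    and gap: "r / sqrt (ov * t 1) > t 2 / sqrt (t 3 * t 1)"
  shows "\<exists>D>0. ((\<lambda>\<mu>. (- (B *v (R \<mu> *v u))) \<bullet> \<alpha> / norm (- (B *v (R \<mu> *v u))))
    has_real_derivative D) (at lam)"
proof -
  define w where "w = B *v (R lam *v u)"
  define X where "X = w \<bullet> (N *v \<alpha>)"
  have w: "w \<noteq> 0" using B_R_nonzero[OF Fu] by (simp add: w_def)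
  have t2: "w \<bullet> w = n * t 2" and t3: "w \<bullet> (N *v w) = t 3" and r: "w \<bullet> \<alpha> = - (n * r)"
    using n_pos by (simp_all add: t_def r_def w_def resolvent_moment_2 resolvent_moment_3 resolvent_inner_transpose)
  have "0 < n * t 2" using w by (simp flip: t2)
  then have pos: "0 < t 2" "0 < t 3" "0 < ov"
    using n_pos N_positive[OF w] N_positive[OF \<alpha>] by (simp_all add: t3 ov_def zero_less_mult_iff)
  moreover have "0 < t 1"
  proof -
    have "0 < lam * t 2" using pos(1) lam_pos by simp
    also have "\<dots> \<le> t 1" using resolvent_moment_1_ge[of u] resolvent_moment_2[of u] by (simp add: t_def)
    finally show ?thesis .
  qed
  moreover have "X\<^sup>2 \<le> t 3 * ov"
    unfolding X_def t3[symmetric] ov_def by (rule cauchy_schwarz_psd[OF N_symmetric N_psd])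
  ultimately have "0 < X * t 2 + r * t 3"
    using gap by (intro ratio_gap_imp_pos) auto
  moreover have "n * (X * (w \<bullet> w) - (w \<bullet> \<alpha>) * (w \<bullet> (N *v w))) = n * n * (X * t 2 + r * t 3)"
    by (simp add: t2 t3 r algebra_simps)
  ultimately have "0 < n * (X * (w \<bullet> w) - (w \<bullet> \<alpha>) * (w \<bullet> (N *v w))) / norm w ^ 3"
    using n_pos w by simp
  with has_real_derivative_cosine[OF Fu, of \<alpha>] show ?thesis
    unfolding X_def w_def by blast
qed

end

section \<open>Projected attributions\<close>

lemma attribution_vector:
  fixes J :: "real^'p^'n" and P :: "real^'q^'p" and G :: "real^'q^'q" and d :: "real^'p"
  assumes sym: "\<And>x y. x \<bullet> (G *v y) = (G *v x) \<bullet> y"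
  shows "(\<chi> i. - (d \<bullet> (P *v (G *v (transpose P *v (J $ i)))))) = - ((J ** P) *v (G *v (transpose P *v d)))"
proof -
  have "d \<bullet> (P *v (G *v (transpose P *v v))) = (transpose P *v d) \<bullet> (G *v (transpose P *v v))" for v
    by (simp add: inner_matrix_vector_transpose)
  also have "\<dots> v = (P *v (G *v (transpose P *v d))) \<bullet> v" for v
    by (simp add: sym matrix_vector_inner_transpose)
  finally have "d \<bullet> (P *v (G *v (transpose P *v (J $ i)))) = (J $ i) \<bullet> (P *v (G *v (transpose P *v d)))" for i
    by (simp add: inner_commute)
  then show ?thesis
    by (simp add: vec_eq_iff matrix_vector_mul_assoc[symmetric] matrix_vector_mul_component)
qed

theorem mainTheorem9:
  fixes L :: "'z \<Rightarrow> real^'p \<Rightarrow> real"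
    and z :: "'n::finite \<Rightarrow> 'z"
    and thS :: "real^'p"
    and thA :: "'z set \<Rightarrow> real^'p"
    and a :: nat
    and P :: "real^'q^'p"
    and lam :: real
    and z' :: 'z
  defines "DA \<equiv> subsets_of_size a (range z)"
    and "J \<equiv> (\<chi> i. grad (L (z i)) thS) :: real^'p^'n"
  defines "FS \<equiv> (1 / real CARD('n)) *\<^sub>R (transpose J ** J)"
    and "fv \<equiv> (\<lambda>A. logitf L z' (thA A))"
  defines "\<alpha> \<equiv> (\<chi> i. unif_exp {A\<in>DA. z i \<in> A} fv - unif_exp DA fv) :: real^'n"
  defines "g \<equiv> (1 / real CARD('n)) *\<^sub>R (transpose J *v \<alpha>)"
    and "u \<equiv> transpose P *v grad (logitf L z') thS"
    and "Fh \<equiv> transpose P ** FS ** P"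
  defines "tau \<equiv> (\<lambda>\<mu> zz. - (grad (logitf L z') thS \<bullet>
              (P *v (matrix_inv (Fh + \<mu> *\<^sub>R mat 1) *v (transpose P *v grad (L zz) thS)))))"
  defines "c \<equiv> (\<lambda>\<mu>. pearson DA fv (\<lambda>A. \<Sum>zz\<in>A. tau \<mu> zz))"
    and "t \<equiv> (\<lambda>k. u \<bullet> (matpow (matrix_inv (Fh + lam *\<^sub>R mat 1)) k *v (Fh *v u)))"
    and "r \<equiv> - (u \<bullet> (matrix_inv (Fh + lam *\<^sub>R mat 1) *v (transpose P *v g)))"
    and "ov \<equiv> \<alpha> \<bullet> (matrix_inv (J ** P ** transpose P ** transpose J
                 + (real CARD('n) * lam) *\<^sub>R mat 1) *v \<alpha>)"
  assumes n2: "CARD('n) \<ge> 2"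
    and inj: "inj z"
    and Lpos: "\<And>zz th. L zz th > 0"
    and Ldiff: "\<And>zz th. (L zz) differentiable (at th)"
    and stat: "(\<Sum>i\<in>UNIV. grad (L (z i)) thS) = 0"
    and a1: "1 \<le> a" and an: "a < CARD('n)"
    and lam: "lam > 0"
    and Fu: "Fh *v u \<noteq> 0"
    and varpos: "unif_var DA fv > 0"
    and alpha0: "\<alpha> \<noteq> 0"
    and cond: "r / sqrt (ov * t 1) > t 2 / sqrt (t 3 * t 1)"
  shows "\<exists>D. (c has_real_derivative D) (at lam) \<and> D > 0"
proof -
  define n where "n = real CARD('n)"
  interpret gram_resolvent "J ** P" n lam
    using lam by unfold_locales (simp add: n_def)
  have Fh: "Fh = F"
    by (simp add: matrix_eq Fh_def FS_def F_def n_def[symmetric] matrix_transpose_mul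
        matrix_vector_mul_assoc[symmetric] scaleR_matrix_vector_assoc[symmetric] matrix_vector_mult_scaleR)
  have "t = (\<lambda>k. u \<bullet> (matpow (R lam) k *v (F *v u)))" by (simp add: t_def Fh R_def)
  moreover have "r = - (u \<bullet> (R lam *v ((1 / n) *\<^sub>R (transpose (J ** P) *v \<alpha>))))"
    by (simp add: r_def Fh R_def g_def n_def[symmetric] matrix_transpose_mul matrix_vector_mul_assoc
        matrix_vector_mult_scaleR)
  moreover have "ov = \<alpha> \<bullet> (N *v \<alpha>)"
    by (simp add: ov_def N_def n_def[symmetric] matrix_transpose_mul matrix_mul_assoc)
  ultimately obtain D where "D > 0" and deriv:
    "((\<lambda>\<mu>. (- ((J ** P) *v (R \<mu> *v u))) \<bullet> \<alpha> / norm (- ((J ** P) *v (R \<mu> *v u))))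
        has_real_derivative D) (at lam)"
    using cosine_derivative_pos[of u \<alpha>] Fu alpha0 cond by (auto simp: Fh)
  obtain \<kappa> where "\<kappa> > 0" and \<kappa>: "\<And>w. (\<Sum>i\<in>UNIV. w (z i)) = 0 \<Longrightarrow>
      pearson DA fv (sum w) = \<kappa> * (((\<chi> i. w (z i)) \<bullet> \<alpha>) / norm (\<chi> i. w (z i)))"
    using pearson_subset_sum_vec[OF inj a1 an varpos[unfolded DA_def]] unfolding \<alpha>_def DA_def by blast
  have J_component: "J $ i = grad (L (z i)) thS" for i by (simp add: J_def)
  have c_eq: "\<kappa> * ((- ((J ** P) *v (R \<mu> *v u))) \<bullet> \<alpha> / norm (- ((J ** P) *v (R \<mu> *v u)))) = c \<mu>"
    if "\<mu> \<in> {0<..}" for \<mu>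
  proof -
    have "(\<Sum>i\<in>UNIV. tau \<mu> (z i)) = - (grad (logitf L z') thS \<bullet> (P *v (matrix_inv (Fh + \<mu> *\<^sub>R mat 1) *v
        (transpose P *v (\<Sum>i\<in>UNIV. grad (L (z i)) thS)))))"
      unfolding tau_def by (simp add: vec.sum inner_sum_right sum_negf)
    then have sum_tau: "(\<Sum>i\<in>UNIV. tau \<mu> (z i)) = 0" by (simp add: stat)
    have "(\<chi> i. tau \<mu> (z i)) =
        (\<chi> i. - (grad (logitf L z') thS \<bullet> (P *v (R \<mu> *v (transpose P *v (J $ i))))))"
      by (simp add: tau_def Fh R_def J_component)
    also have "\<dots> = - ((J ** P) *v (R \<mu> *v u))"
      unfolding u_def by (rule attribution_vector[OF R_symmetric]) (use that in simp)
    finally show ?thesis using sum_tau \<kappa>[of "tau \<mu>"] by (simp add: c_def)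
  qed
  have "(c has_real_derivative \<kappa> * D) (at lam)"
    by (rule has_field_derivative_transform_within_open[OF DERIV_cmult[OF deriv] open_greaterThan _ c_eq])
       (use lam in simp)
  then show ?thesis using \<open>\<kappa> > 0\<close> \<open>D > 0\<close> by (intro exI[of _ "\<kappa> * D"]) simp
qed

end
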